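(* Let $(n_i)_{i\ge1}$ be a strictly increasing sequence of natural numbers and set $C=\bigcup_{i\ge1}[n_i,2n_i)$. Then there exist a set $D\subseteq\mathbb{N}$ of upper density $0$ and a binary function $h\in\mathscr{C}_{I_{\bar d=0}}$ such that $h[C\times D]=\mathbb{N}$.
   Context: $\mathbb{N}=\{0,1,2,\dots\}$. For $A\subseteq\mathbb{N}$, $\bar d(A)=\limsup_{n\to\infty}\frac{|A\cap[0,n)|}{n}$. $\mathscr{C}_{I_{\bar d=0}}$ is the set of all finitary functions $f:\mathbb{N}^k\to\mathbb{N}$ ($k\ge1$) such that $\bar d(f[A^k])=0$ whenever $\bar d(A)=0$. Intervals are intervals of natural numbers. *)

theory Defs
  imports "HOL-Analysis.Analysis"
begin

definition upper_density :: "nat set \<Rightarrow> ereal" where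
  "upper_density A = limsup (\<lambda>n. ereal (real (card (A \<inter> {0..<n})) / real n))"

(* a k-ary finitary function f : \<nat>^k \<rightarrow> \<nat>, represented as a function on lists,
   whose relevant inputs are the lists of length k; A^k = lists of length k over A *)
definition power_set_k :: "nat set \<Rightarrow> nat \<Rightarrow> nat list set" where
  "power_set_k A k = {xs. length xs = k \<and> set xs \<subseteq> A}"

definition in_C_Id0 :: "nat \<Rightarrow> (nat list \<Rightarrow> nat) \<Rightarrow> bool" where
  "in_C_Id0 k f \<longleftrightarrow> k \<ge> 1 \<and>
     (\<forall>A. upper_density A = 0 \<longrightarrow> upper_density (f ` power_set_k A k) = 0)"

definition binary_as_finitary :: "(nat \<Rightarrow> nat \<Rightarrow> nat) \<Rightarrow> nat list \<Rightarrow> nat" where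
  "binary_as_finitary h xs = h (xs ! 0) (xs ! 1)"

end

theory Submission
  imports Defs "HOL-Library.Landau_Symbols"
begin

text \<open>
  Cut \<open>\<nat>\<close> into consecutive blocks \<open>[t\<^sub>k, t\<^sub>k + s\<^sub>k)\<close> whose lengths
  \<open>s\<^sub>k\<close> are terms of the sequence with \<open>s\<^sub>k \<le> t\<^sub>k + n\<^sub>1\<close> and \<open>s\<^sub>k \<rightarrow> \<infinity>\<close>,
  and let \<open>D = {t\<^sub>k}\<close>. The function \<open>h\<close> maps the window \<open>[s\<^sub>k, 2s\<^sub>k) \<subseteq> C\<close>, paired
  with \<open>t\<^sub>k\<close>, by a translation onto the \<open>k\<close>-th block and returns its second argument
  otherwise, so \<open>h[C \<times> D] = \<nat>\<close>. The blocks starting below \<open>N\<close> have total length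
  \<open>O(N)\<close>, so any per-block quantity that is \<open>o(s\<^sub>k)\<close> sums to \<open>o(N)\<close>. Applied to
  the constant \<open>1\<close> this shows that \<open>D\<close> has density zero; applied to
  \<open>|A \<inter> [s\<^sub>k, 2s\<^sub>k)|\<close> it shows the same for \<open>h[A \<times> A]\<close>, which lies in \<open>A\<close>
  together with the translates of these windows.
\<close>

lemma upper_density_eq_0_iff_smallo:
  "upper_density A = 0 \<longleftrightarrow> (\<lambda>N. real (card (A \<inter> {0..<N}))) \<in> o(\<lambda>N. real N)"
proof -
  let ?r = "\<lambda>N. real (card (A \<inter> {0..<N})) / real N"
  have "upper_density A = 0 \<longleftrightarrow> ?r \<longlonglongrightarrow> 0"
  proof
    assume "upper_density A = 0"
    hence sup: "limsup (\<lambda>N. ereal (?r N)) = 0" unfolding upper_density_def .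
    moreover have "0 \<le> liminf (\<lambda>N. ereal (?r N))"
      by (intro Liminf_bounded) auto
    ultimately have inf: "liminf (\<lambda>N. ereal (?r N)) = 0"
      using Liminf_le_Limsup[of sequentially "\<lambda>N. ereal (?r N)"] by simp
    have "(\<lambda>N. ereal (?r N)) \<longlonglongrightarrow> 0"
      using Liminf_eq_Limsup[OF trivial_limit_sequentially inf sup] .
    thus "?r \<longlonglongrightarrow> 0" by (simp add: zero_ereal_def)
  next
    assume "?r \<longlonglongrightarrow> 0"
    hence "(\<lambda>N. ereal (?r N)) \<longlonglongrightarrow> ereal 0" by simp
    thus "upper_density A = 0"
      unfolding upper_density_def zero_ereal_def by (rule lim_imp_Limsup[OF trivial_limit_sequentially])
  qed
  also have "\<dots> \<longleftrightarrow> (\<lambda>N. real (card (A \<inter> {0..<N}))) \<in> o(\<lambda>N. real N)"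
  proof
    assume "?r \<longlonglongrightarrow> 0"
    moreover have "\<forall>\<^sub>F N in sequentially. real N \<noteq> 0"
      by (rule eventually_sequentiallyI[of 1]) simp
    ultimately show "(\<lambda>N. real (card (A \<inter> {0..<N}))) \<in> o(\<lambda>N. real N)"
      by (rule smalloI_tendsto)
  qed (rule smalloD_tendsto)
  finally show ?thesis .
qed

lemma image_binary_as_finitary:
  "binary_as_finitary h ` power_set_k A 2 = (\<lambda>(x, y). h x y) ` (A \<times> A)"
proof (intro equalityI subsetI)
  fix z assume "z \<in> binary_as_finitary h ` power_set_k A 2"
  then obtain xs where xs: "length xs = 2" "set xs \<subseteq> A" "z = h (xs ! 0) (xs ! 1)"
    unfolding power_set_k_def binary_as_finitary_def by auto
  then obtain x y where "xs = [x, y]"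
    by (auto simp: numeral_2_eq_2 length_Suc_conv)
  with xs show "z \<in> (\<lambda>(x, y). h x y) ` (A \<times> A)"
    by auto
next
  fix z assume "z \<in> (\<lambda>(x, y). h x y) ` (A \<times> A)"
  then obtain x y where "x \<in> A" "y \<in> A" "z = binary_as_finitary h [x, y]"
    unfolding binary_as_finitary_def by auto
  thus "z \<in> binary_as_finitary h ` power_set_k A 2"
    unfolding power_set_k_def by auto
qed

lemma sum_initial_segment_smallo:
  fixes a w :: "nat \<Rightarrow> real" and D :: "nat set"
  assumes nonneg: "\<And>y. 0 \<le> w y"
    and small: "a \<in> o(w)"
    and linear: "(\<lambda>N. \<Sum>y\<in>D \<inter> {0..<N}. w y) \<in> O(\<lambda>N. real N)"
  shows "(\<lambda>N. \<Sum>y\<in>D \<inter> {0..<N}. a y) \<in> o(\<lambda>N. real N)"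
proof (rule landau_o.smallI)
  fix e :: real assume e: "e > 0"
  obtain C where C: "C > 0"
    and lin: "\<forall>\<^sub>F N in sequentially. norm (\<Sum>y\<in>D \<inter> {0..<N}. w y) \<le> C * norm (real N)"
    using linear by (rule landau_o.bigE)
  have "\<forall>\<^sub>F y in sequentially. norm (a y) \<le> e / (2 * C) * norm (w y)"
    using e C by (intro landau_o.smallD[OF small]) simp
  then obtain y0 where y0: "\<And>y. y \<ge> y0 \<Longrightarrow> \<bar>a y\<bar> \<le> e / (2 * C) * w y"
    using nonneg by (auto simp: eventually_sequentially)
  define B where "B = (\<Sum>y<y0. \<bar>a y\<bar>)"
  have bound: "norm (\<Sum>y\<in>D \<inter> {0..<N}. a y) \<le> B + e / 2 * real N"
    if N: "(\<Sum>y\<in>D \<inter> {0..<N}. w y) \<le> C * real N" for N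
  proof -
    let ?S = "D \<inter> {0..<N}"
    have "norm (\<Sum>y\<in>?S. a y) \<le> (\<Sum>y\<in>?S. \<bar>a y\<bar>)"
      using sum_abs by simp
    also have "\<dots> = (\<Sum>y\<in>?S \<inter> {..<y0}. \<bar>a y\<bar>) + (\<Sum>y\<in>?S - {..<y0}. \<bar>a y\<bar>)"
      by (rule sum.Int_Diff) simp
    also have "(\<Sum>y\<in>?S \<inter> {..<y0}. \<bar>a y\<bar>) \<le> B"
      unfolding B_def by (rule sum_mono2) auto
    also have "(\<Sum>y\<in>?S - {..<y0}. \<bar>a y\<bar>) \<le> (\<Sum>y\<in>?S - {..<y0}. e / (2 * C) * w y)"
      using y0 by (intro sum_mono) auto
    also have "\<dots> \<le> (\<Sum>y\<in>?S. e / (2 * C) * w y)"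
      using e C nonneg by (intro sum_mono2) auto
    also have "\<dots> = e / (2 * C) * (\<Sum>y\<in>?S. w y)"
      by (rule sum_distrib_left[symmetric])
    also have "\<dots> \<le> e / (2 * C) * (C * real N)"
      using e C N by (intro mult_left_mono) auto
    also have "\<dots> = e / 2 * real N"
      using C by simp
    finally show ?thesis by simp
  qed
  have "\<forall>\<^sub>F N in sequentially. 2 * B / e \<le> real N"
    using filterlim_real_sequentially by (simp add: filterlim_at_top)
  with lin show "\<forall>\<^sub>F N in sequentially. norm (\<Sum>y\<in>D \<inter> {0..<N}. a y) \<le> e * norm (real N)"
  proof eventually_elim
    case (elim N)
    hence "B + e / 2 * real N \<le> e * real N"
      using e by (simp add: field_simps)
    with bound[of N] elim show ?case by (simp add: abs_le_iff)
  qed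
qed

primrec block_start :: "(nat \<Rightarrow> nat) \<Rightarrow> nat \<Rightarrow> nat" where
  "block_start g 0 = 0"
| "block_start g (Suc k) = block_start g k + g (block_start g k)"

definition block_map :: "(nat \<Rightarrow> nat) \<Rightarrow> nat \<Rightarrow> nat \<Rightarrow> nat" where
  "block_map g x y =
     (if y \<in> range (block_start g) \<and> g y \<le> x \<and> x < 2 * g y then y + x - g y else y)"

lemma sum_block_lengths: "(\<Sum>k<m. g (block_start g k)) = block_start g m"
  by (induction m) simp_all

lemma block_start_strict_mono:
  assumes "\<And>t. 0 < g t"
  shows "strict_mono (block_start g)"
  using assms by (intro strict_monoI_Suc) simp

lemma block_start_covers:
  assumes "\<And>t. 0 < g t"
  shows "\<exists>k. block_start g k \<le> m \<and> m < block_start g k + g (block_start g k)"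
proof (induction m)
  case 0
  show ?case using assms[of 0] by (intro exI[of _ 0]) simp
next
  case (Suc m)
  then obtain k where k: "block_start g k \<le> m" "m < block_start g k + g (block_start g k)"
    by blast
  show ?case
  proof (cases "Suc m < block_start g k + g (block_start g k)")
    case True
    with k show ?thesis by (intro exI[of _ k]) simp
  next
    case False
    with k have "Suc m = block_start g (Suc k)" by simp
    with assms show ?thesis by (intro exI[of _ "Suc k"]) simp
  qed
qed

lemma sum_block_lengths_le:
  assumes pos: "\<And>t. 0 < g t" and short: "\<And>t. g t \<le> t + c"
  shows "(\<Sum>y\<in>range (block_start g) \<inter> {0..<N}. g y) \<le> 2 * N + c"
proof -
  let ?b = "block_start g"
  have mono: "strict_mono ?b" using pos by (rule block_start_strict_mono)
  define m where "m = (LEAST k. N \<le> ?b k)"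
  have "N \<le> ?b N" using strict_mono_imp_increasing[OF mono] by simp
  hence "N \<le> ?b m" unfolding m_def by (rule LeastI)
  have below: "?b k < N \<longleftrightarrow> k < m" for k
  proof
    assume "?b k < N"
    with \<open>N \<le> ?b m\<close> have "?b k < ?b m" by simp
    thus "k < m" using mono by (simp add: strict_mono_less)
  next
    assume "k < m"
    thus "?b k < N"
      using not_less_Least[of k "\<lambda>k. N \<le> ?b k"] unfolding m_def by simp
  qed
  have "range ?b \<inter> {0..<N} = ?b ` {..<m}"
  proof (intro equalityI subsetI)
    fix y assume "y \<in> range ?b \<inter> {0..<N}"
    then obtain k where k: "y = ?b k" "?b k < N" by auto
    hence "k \<in> {..<m}" using below by simp
    with k(1) show "y \<in> ?b ` {..<m}" by (rule image_eqI)
  next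
    fix y assume "y \<in> ?b ` {..<m}"
    then obtain k where "y = ?b k" "k < m" by auto
    thus "y \<in> range ?b \<inter> {0..<N}" using below by simp
  qed
  hence "(\<Sum>y\<in>range ?b \<inter> {0..<N}. g y) = (\<Sum>k<m. g (?b k))"
    using strict_mono_imp_inj_on[OF mono] by (simp add: sum.reindex)
  also have "\<dots> = ?b m" by (rule sum_block_lengths)
  also have "\<dots> \<le> 2 * N + c"
  proof (cases m)
    case (Suc k)
    hence "?b k < N" using below by simp
    with short[of "?b k"] show ?thesis using Suc by simp
  qed simp
  finally show ?thesis .
qed

lemma block_map_onto:
  assumes pos: "\<And>t. 0 < g t" and window: "\<And>t. {g t..<2 * g t} \<subseteq> C"
  shows "(\<lambda>(x, y). block_map g x y) ` (C \<times> range (block_start g)) = UNIV"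
proof (intro equalityI subsetI)
  fix m :: nat
  obtain k where k: "block_start g k \<le> m" "m < block_start g k + g (block_start g k)"
    using block_start_covers[of g m] pos by blast
  define y where "y = block_start g k"
  define x where "x = g y + (m - y)"
  have "x \<in> {g y..<2 * g y}" using k unfolding x_def y_def by auto
  hence "x \<in> C" using window by blast
  moreover have "y \<in> range (block_start g)" unfolding y_def by simp
  moreover have "m = block_map g x y"
    using k unfolding block_map_def x_def y_def by auto
  ultimately show "m \<in> (\<lambda>(x, y). block_map g x y) ` (C \<times> range (block_start g))"
    by (intro image_eqI[of _ _ "(x, y)"]) simp_all
qed simp

lemma block_map_image_subset:
  "(\<lambda>(x, y). block_map g x y) ` (A \<times> A) \<inter> {0..<N} \<subseteq> A \<inter> {0..<N} \<union>
     (\<Union>y\<in>range (block_start g) \<inter> {0..<N}. (\<lambda>x. y + x - g y) ` (A \<inter> {g y..<2 * g y}))"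
  by (auto simp: block_map_def split: if_splits)

lemma card_block_map_image_le:
  "card ((\<lambda>(x, y). block_map g x y) ` (A \<times> A) \<inter> {0..<N}) \<le>
     card (A \<inter> {0..<N}) + (\<Sum>y\<in>range (block_start g) \<inter> {0..<N}. card (A \<inter> {g y..<2 * g y}))"
proof -
  let ?S = "range (block_start g) \<inter> {0..<N}"
  let ?G = "\<lambda>y. (\<lambda>x. y + x - g y) ` (A \<inter> {g y..<2 * g y})"
  have "card ((\<lambda>(x, y). block_map g x y) ` (A \<times> A) \<inter> {0..<N}) \<le> card (A \<inter> {0..<N} \<union> (\<Union>y\<in>?S. ?G y))"
    by (rule card_mono[OF _ block_map_image_subset]) auto
  also have "\<dots> \<le> card (A \<inter> {0..<N}) + card (\<Union>y\<in>?S. ?G y)"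
    by (rule card_Un_le)
  also have "card (\<Union>y\<in>?S. ?G y) \<le> (\<Sum>y\<in>?S. card (?G y))"
    by (rule card_UN_le) simp
  also have "\<dots> \<le> (\<Sum>y\<in>?S. card (A \<inter> {g y..<2 * g y}))"
    by (intro sum_mono card_image_le) simp
  finally show ?thesis by simp
qed

lemma block_lengths_bigo:
  assumes pos: "\<And>t. 0 < g t" and short: "\<And>t. g t \<le> t + c"
  shows "(\<lambda>N. \<Sum>y\<in>range (block_start g) \<inter> {0..<N}. real (g y)) \<in> O(\<lambda>N. real N)"
proof (rule landau_o.bigI[of "2 + real c"])
  show "\<forall>\<^sub>F N in sequentially.
          norm (\<Sum>y\<in>range (block_start g) \<inter> {0..<N}. real (g y)) \<le> (2 + real c) * norm (real N)"
  proof (rule eventually_sequentiallyI[of 1])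
    fix N :: nat assume "1 \<le> N"
    have "(\<Sum>y\<in>range (block_start g) \<inter> {0..<N}. g y) \<le> 2 * N + c"
      using pos short by (rule sum_block_lengths_le)
    also have "\<dots> \<le> (2 + c) * N" using \<open>1 \<le> N\<close> by (simp add: algebra_simps)
    finally have "real (\<Sum>y\<in>range (block_start g) \<inter> {0..<N}. g y) \<le> real ((2 + c) * N)"
      by (rule of_nat_mono)
    thus "norm (\<Sum>y\<in>range (block_start g) \<inter> {0..<N}. real (g y)) \<le> (2 + real c) * norm (real N)"
      by (simp add: sum_nonneg algebra_simps)
  qed
qed simp

lemma upper_density_block_starts:
  assumes pos: "\<And>t. 0 < g t" and short: "\<And>t. g t \<le> t + c"
    and grow: "filterlim g at_top at_top"
  shows "upper_density (range (block_start g)) = 0"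
proof -
  have "filterlim (\<lambda>y. real (g y)) at_infinity sequentially"
    using filterlim_compose[OF filterlim_real_sequentially grow]
    by (rule filterlim_at_top_imp_at_infinity)
  hence "(\<lambda>_. 1) \<in> o(\<lambda>y. real (g y))"
    by (simp flip: smallomega_iff_smallo add: smallomega_1_conv_filterlim)
  hence "(\<lambda>N. \<Sum>y\<in>range (block_start g) \<inter> {0..<N}. 1) \<in> o(\<lambda>N. real N)"
    using block_lengths_bigo[OF pos short] by (intro sum_initial_segment_smallo) simp_all
  thus ?thesis
    unfolding upper_density_eq_0_iff_smallo by simp
qed

lemma card_window_smallo:
  fixes g :: "nat \<Rightarrow> nat"
  assumes A: "upper_density A = 0" and grow: "filterlim g at_top sequentially"
  shows "(\<lambda>y. real (card (A \<inter> {g y..<2 * g y}))) \<in> o(\<lambda>y. real (g y))"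
proof -
  let ?count = "\<lambda>N. real (card (A \<inter> {0..<N}))"
  have "filterlim (\<lambda>y. 2 * g y) at_top sequentially"
    using grow by (rule filterlim_at_top_mono) simp
  with A have "(\<lambda>y. ?count (2 * g y)) \<in> o(\<lambda>y. real (2 * g y))"
    unfolding upper_density_eq_0_iff_smallo by (rule landau_o.small.compose)
  hence "(\<lambda>y. ?count (2 * g y)) \<in> o(\<lambda>y. real (g y))"
    by simp
  moreover have "(\<lambda>y. real (card (A \<inter> {g y..<2 * g y}))) \<in> O(\<lambda>y. ?count (2 * g y))"
  proof (rule landau_o.big_mono[OF always_eventually, OF allI])
    fix y
    have "card (A \<inter> {g y..<2 * g y}) \<le> card (A \<inter> {0..<2 * g y})"
      by (rule card_mono) auto
    thus "norm (real (card (A \<inter> {g y..<2 * g y}))) \<le> norm (?count (2 * g y))"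
      by simp
  qed
  ultimately show ?thesis
    by (rule landau_o.big_small_trans[rotated])
qed

lemma upper_density_block_map_image:
  assumes pos: "\<And>t. 0 < g t" and short: "\<And>t. g t \<le> t + c"
    and grow: "filterlim g at_top at_top"
    and A: "upper_density A = 0"
  shows "upper_density ((\<lambda>(x, y). block_map g x y) ` (A \<times> A)) = 0"
proof -
  let ?image = "(\<lambda>(x, y). block_map g x y) ` (A \<times> A)"
  let ?bound = "\<lambda>N. real (card (A \<inter> {0..<N}))
      + (\<Sum>y\<in>range (block_start g) \<inter> {0..<N}. real (card (A \<inter> {g y..<2 * g y})))"
  have "(\<lambda>N. \<Sum>y\<in>range (block_start g) \<inter> {0..<N}. real (card (A \<inter> {g y..<2 * g y})))
          \<in> o(\<lambda>N. real N)"
    using card_window_smallo[OF A grow] block_lengths_bigo[OF pos short]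
    by (rule sum_initial_segment_smallo[rotated]) simp
  with A have "?bound \<in> o(\<lambda>N. real N)"
    unfolding upper_density_eq_0_iff_smallo by (rule sum_in_smallo)
  moreover have "(\<lambda>N. real (card (?image \<inter> {0..<N}))) \<in> O(?bound)"
  proof (rule landau_o.big_mono[OF always_eventually, OF allI])
    fix N
    have "real (card (?image \<inter> {0..<N})) \<le> ?bound N"
      using of_nat_mono[OF card_block_map_image_le, where 'a = real]
      by (simp only: of_nat_add of_nat_sum)
    moreover have "0 \<le> ?bound N"
      by (intro add_nonneg_nonneg sum_nonneg) simp_all
    ultimately show "norm (real (card (?image \<inter> {0..<N}))) \<le> norm (?bound N)"
      by (simp only: real_norm_def abs_of_nonneg of_nat_0_le_iff)
  qed
  ultimately show ?thesis
    unfolding upper_density_eq_0_iff_smallo by (rule landau_o.big_small_trans[rotated])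
qed

definition largest_term_le :: "(nat \<Rightarrow> nat) \<Rightarrow> nat \<Rightarrow> nat" where
  "largest_term_le n t = n (Max {j. n j \<le> t})"

lemma finite_terms_le:
  fixes n :: "nat \<Rightarrow> nat"
  assumes "strict_mono n"
  shows "finite {j. n j \<le> t}"
proof (rule finite_subset)
  show "{j. n j \<le> t} \<subseteq> {..t}"
    using strict_mono_imp_increasing[OF assms] by (auto intro: le_trans)
qed simp

lemma term_le_largest_term_le:
  fixes n :: "nat \<Rightarrow> nat"
  assumes "strict_mono n" and "n j \<le> t"
  shows "n j \<le> largest_term_le n t"
proof -
  have "j \<le> Max {j. n j \<le> t}"
    using finite_terms_le[OF assms(1)] assms(2) by (intro Max_ge) auto
  thus ?thesis
    unfolding largest_term_le_def using assms(1) by (simp add: strict_mono_less_eq)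
qed

lemma largest_term_le_le:
  fixes n :: "nat \<Rightarrow> nat"
  assumes "strict_mono n" and "n 0 \<le> t"
  shows "largest_term_le n t \<le> t"
proof -
  have "Max {j. n j \<le> t} \<in> {j. n j \<le> t}"
    using finite_terms_le[OF assms(1)] assms(2) by (intro Max_in) auto
  thus ?thesis unfolding largest_term_le_def by simp
qed

lemma filterlim_largest_term_le:
  fixes n :: "nat \<Rightarrow> nat"
  assumes "strict_mono n"
  shows "filterlim (largest_term_le n) at_top at_top"
  unfolding filterlim_at_top
proof
  fix Z
  show "\<forall>\<^sub>F t in sequentially. Z \<le> largest_term_le n t"
  proof (rule eventually_sequentiallyI[of "n Z"])
    fix t assume "n Z \<le> t"
    hence "n Z \<le> largest_term_le n t" by (rule term_le_largest_term_le[OF assms])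
    thus "Z \<le> largest_term_le n t" using strict_mono_imp_increasing[OF assms, of Z] by simp
  qed
qed

lemma largest_term_le_window:
  "{largest_term_le n t..<2 * largest_term_le n t} \<subseteq> (\<Union>i. {n i..<2 * n i})"
  unfolding largest_term_le_def by blast

theorem mainTheorem11:
  fixes n :: "nat \<Rightarrow> nat"
  assumes "strict_mono n"
  shows "\<exists>D :: nat set. \<exists>h :: nat \<Rightarrow> nat \<Rightarrow> nat.
           upper_density D = 0 \<and>
           in_C_Id0 2 (binary_as_finitary h) \<and>
           (\<lambda>(x, y). h x y) ` ((\<Union>i. {n i..<2 * n i}) \<times> D) = UNIV"
proof -
  \<comment> \<open>the shift by \<open>n 1\<close> keeps every block length at least \<open>n 1 > 0\<close>\<close>
  define g where "g t = largest_term_le n (t + n 1)" for t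
  have "n 0 < n 1" using assms by (simp add: strict_mono_less)
  hence pos: "0 < g t" for t
    using term_le_largest_term_le[OF assms, of 1 "t + n 1"] unfolding g_def by simp
  have short: "g t \<le> t + n 1" for t
    using largest_term_le_le[OF assms] \<open>n 0 < n 1\<close> unfolding g_def by simp
  have grow: "filterlim g at_top at_top"
    unfolding g_def
    by (rule filterlim_compose[OF filterlim_largest_term_le[OF assms] filterlim_add_const_nat_at_top])
  have window: "{g t..<2 * g t} \<subseteq> (\<Union>i. {n i..<2 * n i})" for t
    unfolding g_def by (rule largest_term_le_window)
  show ?thesis
  proof (intro exI conjI)
    show "upper_density (range (block_start g)) = 0"
      using pos short grow by (rule upper_density_block_starts)
    show "in_C_Id0 2 (binary_as_finitary (block_map g))"
      unfolding in_C_Id0_def image_binary_as_finitary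
      using upper_density_block_map_image[OF pos short grow] by simp
    show "(\<lambda>(x, y). block_map g x y) ` ((\<Union>i. {n i..<2 * n i}) \<times> range (block_start g)) = UNIV"
      using pos window by (rule block_map_onto)
  qed
qed

end
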